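(* Let $k=(k_s)_{s\geq1}$ be a sequence of nonnegative integers and $l=(l_s)$, $m=(m_s)$ sequences with values in $\mathbb{Z}_{\geq2}\cup\{\infty\}$ and $\mathbb{Z}_{\geq1}\cup\{\infty\}$ respectively, such that $2k_s<m_s$ for all $s$. Let $\Delta=\Delta(k,l,m)$ be the subgroup of $\prod_s \mathbb{Z}/m_s\mathbb{Z}\wr D_{l_s}$ generated (and marked) by the three sequences $\tau=(\tau_s)$, $\alpha=(\alpha_s)$, $\beta=(\beta_s)$, where $\tau_s=(+1,\mathbb{1})$, $\alpha_s=(0,a_s\delta_0)$, $\beta_s=(0,b_s\delta_{k_s})$. If $R<\frac{\min_s k_s-1}{2}$, then the marked balls of radius $R$ in $\Delta$ and in $\Gamma(0,2,\infty)$ coincide. Moreover, if the sequence $k$ is unbounded, then $\Gamma(0,2,\infty)$ is a marked quotient of $\Delta$.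
   Context: $D_l=\langle a,b\mid a^2=b^2=(ab)^l=1\rangle$ is the dihedral group of order $2l$ ($D_\infty$ infinite dihedral); $a_s,b_s$ denote these generators in $D_{l_s}$. The wreath product $B\wr L$ has elements $(g,f)$, $g\in B$, $f:B\to L$ finitely supported, with $B$ acting by shift; $\mathbb{1}$ is the trivial function and $c\,\delta_g$ the function equal to $c$ at $g$, trivial elsewhere; $\mathbb{Z}/\infty\mathbb{Z}=\mathbb{Z}$. $\Gamma(0,2,\infty)$ is $\mathbb{Z}\wr D_2$ marked by $(+1,\mathbb{1}),(0,a\delta_0),(0,b\delta_0)$. Marked balls of radius $R$ in two groups marked by ordered triples coincide if a word of length at most $2R$ in the free group on three letters is trivial in one iff it is trivial in the other. A marked group $G$ is a marked quotient of $H$ if the map sending the $i$-th marked generator of $H$ to that of $G$ extends to a surjective homomorphism. *)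

theory Defs
  imports "HOL-Algebra.Algebra" "HOL-Library.Extended_Nat"
begin

text \<open>Z/infinity Z = Z. We encode m :: enat; integer_mod_group 0 is the integers.\<close>

definition zmod_index :: "enat \<Rightarrow> nat" where
  "zmod_index m = (case m of enat n \<Rightarrow> n | \<infinity> \<Rightarrow> 0)"

definition Zmod :: "enat \<Rightarrow> int monoid" where
  "Zmod m = integer_mod_group (zmod_index m)"

text \<open>Class of an integer in Z/mZ (normal form); for m = infinity it is the integer itself.\<close>
definition zcls :: "enat \<Rightarrow> int \<Rightarrow> int" where
  "zcls m x = x mod int (zmod_index m)"

text \<open>Standard model: (i,e) stands for r^i s^e with r = ab (of order l) and s = a;
  the rotation exponent i is taken in Z/lZ (Z if l is infinite).\<close>

definition dihedral :: "enat \<Rightarrow> (int \<times> bool) monoid" where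
  "dihedral l = \<lparr>carrier = {(i, e). i \<in> carrier (Zmod l)},
     monoid.mult = (\<lambda>(i, e) (j, f). (zcls l (i + (if e then - j else j)), e \<noteq> f)),
     one = (0, False)\<rparr>"

definition dih_a :: "enat \<Rightarrow> int \<times> bool" where
  "dih_a l = (0, True)"

definition dih_b :: "enat \<Rightarrow> int \<times> bool" where
  "dih_b l = (zcls l (-1), True)"

definition wreath :: "('b, 'x) monoid_scheme \<Rightarrow> ('c, 'y) monoid_scheme \<Rightarrow> ('b \<times> ('b \<Rightarrow> 'c)) monoid" where
  "wreath B L = \<lparr>carrier = {(g, f). g \<in> carrier B \<and> f \<in> extensional (carrier B)
        \<and> f \<in> carrier B \<rightarrow> carrier L \<and> finite {x \<in> carrier B. f x \<noteq> \<one>\<^bsub>L\<^esub>}},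
     monoid.mult = (\<lambda>(g, f) (h, f'). (g \<otimes>\<^bsub>B\<^esub> h,
        (\<lambda>x\<in>carrier B. f x \<otimes>\<^bsub>L\<^esub> f' (inv\<^bsub>B\<^esub> g \<otimes>\<^bsub>B\<^esub> x)))),
     one = (\<one>\<^bsub>B\<^esub>, (\<lambda>x\<in>carrier B. \<one>\<^bsub>L\<^esub>))\<rparr>"

definition triv_fun :: "('b, 'x) monoid_scheme \<Rightarrow> ('c, 'y) monoid_scheme \<Rightarrow> 'b \<Rightarrow> 'c" where
  "triv_fun B L = (\<lambda>x\<in>carrier B. \<one>\<^bsub>L\<^esub>)"

definition delta_fun :: "('b, 'x) monoid_scheme \<Rightarrow> ('c, 'y) monoid_scheme \<Rightarrow> 'c \<Rightarrow> 'b \<Rightarrow> 'b \<Rightarrow> 'c" where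
  "delta_fun B L c g = (\<lambda>x\<in>carrier B. if x = g then c else \<one>\<^bsub>L\<^esub>)"

datatype letter = X1 | X2 | X3

text \<open>Words in the free group on three letters: lists of letters with an exponent sign
  (True = inverse letter).\<close>
type_synonym word3 = "(letter \<times> bool) list"

fun eval_word :: "('a, 'b) monoid_scheme \<Rightarrow> (letter \<Rightarrow> 'a) \<Rightarrow> word3 \<Rightarrow> 'a" where
  "eval_word G gen [] = \<one>\<^bsub>G\<^esub>"
| "eval_word G gen ((x, e) # w) =
     (if e then inv\<^bsub>G\<^esub> (gen x) else gen x) \<otimes>\<^bsub>G\<^esub> eval_word G gen w"

definition marked3 :: "'a \<Rightarrow> 'a \<Rightarrow> 'a \<Rightarrow> letter \<Rightarrow> 'a" where
  "marked3 x y z = (\<lambda>v. case v of X1 \<Rightarrow> x | X2 \<Rightarrow> y | X3 \<Rightarrow> z)"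

text \<open>Marked balls of radius R coincide: a word of length at most 2R is trivial in
  one marked group iff it is trivial in the other.\<close>
definition balls_coincide ::
  "real \<Rightarrow> ('a, 'b) monoid_scheme \<Rightarrow> (letter \<Rightarrow> 'a) \<Rightarrow> ('c, 'd) monoid_scheme \<Rightarrow> (letter \<Rightarrow> 'c) \<Rightarrow> bool" where
  "balls_coincide R G gG H gH \<longleftrightarrow>
     (\<forall>w :: word3. real (length w) \<le> 2 * R \<longrightarrow>
        (eval_word G gG w = \<one>\<^bsub>G\<^esub> \<longleftrightarrow> eval_word H gH w = \<one>\<^bsub>H\<^esub>))"

definition marked_quotient ::
  "('a, 'b) monoid_scheme \<Rightarrow> (letter \<Rightarrow> 'a) \<Rightarrow> ('c, 'd) monoid_scheme \<Rightarrow> (letter \<Rightarrow> 'c) \<Rightarrow> bool" where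
  "marked_quotient G gG H gH \<longleftrightarrow>
     (\<exists>h. h \<in> hom H G \<and> (\<forall>v. h (gH v) = gG v) \<and> h ` carrier H = carrier G)"

definition Gamma_0_2_inf :: "(int \<times> (int \<Rightarrow> int \<times> bool)) monoid" where
  "Gamma_0_2_inf = wreath (Zmod \<infinity>) (dihedral 2)"

definition Gamma_gens :: "letter \<Rightarrow> int \<times> (int \<Rightarrow> int \<times> bool)" where
  "Gamma_gens = marked3
     (1, triv_fun (Zmod \<infinity>) (dihedral 2))
     (0, delta_fun (Zmod \<infinity>) (dihedral 2) (dih_a 2) 0)
     (0, delta_fun (Zmod \<infinity>) (dihedral 2) (dih_b 2) 0)"

definition Prod_group :: "(nat \<Rightarrow> enat) \<Rightarrow> (nat \<Rightarrow> enat)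
    \<Rightarrow> (nat \<Rightarrow> int \<times> (int \<Rightarrow> int \<times> bool)) monoid" where
  "Prod_group l m = product_group {1..} (\<lambda>s. wreath (Zmod (m s)) (dihedral (l s)))"

definition Delta_tau :: "(nat \<Rightarrow> enat) \<Rightarrow> (nat \<Rightarrow> enat) \<Rightarrow> nat \<Rightarrow> int \<times> (int \<Rightarrow> int \<times> bool)" where
  "Delta_tau l m = (\<lambda>s\<in>{1..}. (zcls (m s) 1, triv_fun (Zmod (m s)) (dihedral (l s))))"

definition Delta_alpha :: "(nat \<Rightarrow> enat) \<Rightarrow> (nat \<Rightarrow> enat) \<Rightarrow> nat \<Rightarrow> int \<times> (int \<Rightarrow> int \<times> bool)" where
  "Delta_alpha l m = (\<lambda>s\<in>{1..}. (0, delta_fun (Zmod (m s)) (dihedral (l s)) (dih_a (l s)) 0))"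

definition Delta_beta :: "(nat \<Rightarrow> nat) \<Rightarrow> (nat \<Rightarrow> enat) \<Rightarrow> (nat \<Rightarrow> enat) \<Rightarrow> nat \<Rightarrow> int \<times> (int \<Rightarrow> int \<times> bool)" where
  "Delta_beta k l m = (\<lambda>s\<in>{1..}. (0, delta_fun (Zmod (m s)) (dihedral (l s)) (dih_b (l s))
                                       (zcls (m s) (int (k s)))))"

definition Delta_gens :: "(nat \<Rightarrow> nat) \<Rightarrow> (nat \<Rightarrow> enat) \<Rightarrow> (nat \<Rightarrow> enat) \<Rightarrow> letter \<Rightarrow> nat \<Rightarrow> int \<times> (int \<Rightarrow> int \<times> bool)" where
  "Delta_gens k l m = marked3 (Delta_tau l m) (Delta_alpha l m) (Delta_beta k l m)"

definition Delta :: "(nat \<Rightarrow> nat) \<Rightarrow> (nat \<Rightarrow> enat) \<Rightarrow> (nat \<Rightarrow> enat) \<Rightarrow> (nat \<Rightarrow> int \<times> (int \<Rightarrow> int \<times> bool)) monoid" where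
  "Delta k l m = subgroup_generated (Prod_group l m) (range (Delta_gens k l m))"

end

theory Submission
  imports Defs
begin

text \<open>
  Reading a word from left to right in \<open>\<int>/n\<int> \<wr> D\<^sub>l\<close> with generators \<open>\<tau>\<close>,
  \<open>a\<delta>\<^sub>0\<close>, \<open>b\<delta>\<^sub>c\<close>, the letter \<open>\<tau>\<^sup>\<plusminus>\<^sup>1\<close> moves a cursor and every
  \<open>\<alpha>\<close>- or \<open>\<beta>\<close>-letter multiplies the lamp at the cursor (shifted by \<open>c\<close> for \<open>\<beta>\<close>) by the
  involution \<open>a\<close> resp. \<open>b\<close>. For a word shorter than \<open>k\<close>, with \<open>c = k\<close> and \<open>n = 0\<close> or
  \<open>n > 2k\<close>, all cursor positions lie in an interval of length \<open>< k\<close>, so distinct letter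
  events never hit the same lamp. Hence the word is trivial iff its cursor returns to \<open>0\<close> and
  every event occurs an even number of times, which is also the triviality criterion in
  \<open>\<Gamma>(0,2,\<infinity>)\<close> because \<open>a\<close> and \<open>b\<close> commute in \<open>D\<^sub>2\<close>. As \<open>\<Delta>\<close> is evaluated
  coordinatewise, short words are trivial in \<open>\<Delta>\<close> iff they are trivial in \<open>\<Gamma>\<close>; if \<open>k\<close> is
  unbounded, every relation of \<open>\<Delta>\<close> is short compared to some \<open>k\<^sub>s\<close> and thus holds in \<open>\<Gamma>\<close>.
\<close>

lemma carrier_integer_mod_group_iff: "x \<in> carrier (integer_mod_group n) \<longleftrightarrow> x mod int n = x"
  by (cases "n = 0") (auto simp: carrier_integer_mod_group,
      (metis of_nat_0_less_iff pos_mod_bound pos_mod_sign)+)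

lemma carrier_dihedral: "carrier (dihedral l) = {(i, e). zcls l i = i}"
  by (auto simp: dihedral_def Zmod_def zcls_def carrier_integer_mod_group_iff)

lemma mult_dihedral:
  "(i, e) \<otimes>\<^bsub>dihedral l\<^esub> (j, f) = (zcls l (i + (if e then - j else j)), e \<noteq> f)"
  by (simp add: dihedral_def)

lemma one_dihedral: "\<one>\<^bsub>dihedral l\<^esub> = (0, False)"
  by (simp add: dihedral_def)

lemma group_dihedral: "group (dihedral l)"
proof (rule groupI)
  fix x y z assume "x \<in> carrier (dihedral l)" "y \<in> carrier (dihedral l)" "z \<in> carrier (dihedral l)"
  then show "x \<otimes>\<^bsub>dihedral l\<^esub> y \<otimes>\<^bsub>dihedral l\<^esub> z = x \<otimes>\<^bsub>dihedral l\<^esub> (y \<otimes>\<^bsub>dihedral l\<^esub> z)"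
    by (cases x; cases y; cases z) (auto simp: mult_dihedral zcls_def mod_simps algebra_simps)
next
  fix x assume x: "x \<in> carrier (dihedral l)"
  obtain i e where "x = (i, e)" by (cases x)
  then have "(if e then (i, True) else (zcls l (- i), False)) \<otimes>\<^bsub>dihedral l\<^esub> x = \<one>\<^bsub>dihedral l\<^esub>"
    by (simp add: mult_dihedral one_dihedral zcls_def mod_simps)
  moreover have "(if e then (i, True) else (zcls l (- i), False)) \<in> carrier (dihedral l)"
    using x \<open>x = (i, e)\<close> by (simp add: carrier_dihedral zcls_def)
  ultimately show "\<exists>y\<in>carrier (dihedral l). y \<otimes>\<^bsub>dihedral l\<^esub> x = \<one>\<^bsub>dihedral l\<^esub>" by blast
qed (auto simp: carrier_dihedral mult_dihedral one_dihedral zcls_def)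

lemma carrier_wreath:
  "(g, f) \<in> carrier (wreath B L) \<longleftrightarrow> g \<in> carrier B \<and> f \<in> extensional (carrier B)
     \<and> f \<in> carrier B \<rightarrow> carrier L \<and> finite {x \<in> carrier B. f x \<noteq> \<one>\<^bsub>L\<^esub>}"
  by (simp add: wreath_def)

lemma mult_wreath:
  "(g, f) \<otimes>\<^bsub>wreath B L\<^esub> (h, f') =
     (g \<otimes>\<^bsub>B\<^esub> h, \<lambda>x\<in>carrier B. f x \<otimes>\<^bsub>L\<^esub> f' (inv\<^bsub>B\<^esub> g \<otimes>\<^bsub>B\<^esub> x))"
  by (simp add: wreath_def)

lemma one_wreath: "\<one>\<^bsub>wreath B L\<^esub> = (\<one>\<^bsub>B\<^esub>, \<lambda>x\<in>carrier B. \<one>\<^bsub>L\<^esub>)"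
  by (simp add: wreath_def)

lemma (in group) finite_support_translate:
  assumes "g \<in> carrier G" "finite {x \<in> carrier G. f x \<noteq> c}"
  shows "finite {x \<in> carrier G. f (g \<otimes> x) \<noteq> c}"
proof -
  have "{x \<in> carrier G. f (g \<otimes> x) \<noteq> c} \<subseteq> (\<lambda>x. inv g \<otimes> x) ` {x \<in> carrier G. f x \<noteq> c}"
  proof
    fix x assume "x \<in> {x \<in> carrier G. f (g \<otimes> x) \<noteq> c}"
    then show "x \<in> (\<lambda>x. inv g \<otimes> x) ` {x \<in> carrier G. f x \<noteq> c}"
      using assms(1) by (intro image_eqI[of _ _ "g \<otimes> x"]) (auto simp: m_assoc[symmetric])
  qed
  then show ?thesis using assms(2) finite_subset by blast
qed

context
  fixes B :: "('b, 'x) monoid_scheme" and L :: "('c, 'y) monoid_scheme"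
  assumes B: "group B" and L: "group L"
begin

interpretation B: group B by (fact B)
interpretation L: group L by (fact L)

lemma wreath_mult_closed:
  assumes "(g, f) \<in> carrier (wreath B L)" "(h, f') \<in> carrier (wreath B L)"
  shows "(g, f) \<otimes>\<^bsub>wreath B L\<^esub> (h, f') \<in> carrier (wreath B L)"
proof -
  let ?F = "\<lambda>x\<in>carrier B. f x \<otimes>\<^bsub>L\<^esub> f' (inv\<^bsub>B\<^esub> g \<otimes>\<^bsub>B\<^esub> x)"
  have g: "g \<in> carrier B" and h: "h \<in> carrier B"
    and f: "f \<in> carrier B \<rightarrow> carrier L" and f': "f' \<in> carrier B \<rightarrow> carrier L"
    using assms by (auto simp: carrier_wreath)
  have "finite ({x \<in> carrier B. f x \<noteq> \<one>\<^bsub>L\<^esub>}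
      \<union> {x \<in> carrier B. f' (inv\<^bsub>B\<^esub> g \<otimes>\<^bsub>B\<^esub> x) \<noteq> \<one>\<^bsub>L\<^esub>})"
    using assms g by (auto simp: carrier_wreath intro: B.finite_support_translate)
  then have "finite {x \<in> carrier B. ?F x \<noteq> \<one>\<^bsub>L\<^esub>}"
    by (rule finite_subset[rotated]) auto
  moreover have "?F \<in> carrier B \<rightarrow> carrier L"
    using f f' g by (auto simp: Pi_iff)
  ultimately show ?thesis using g h by (simp add: mult_wreath carrier_wreath)
qed

lemma wreath_mult_assoc:
  assumes "(g, f) \<in> carrier (wreath B L)" "(h, f') \<in> carrier (wreath B L)"
    "(j, f'') \<in> carrier (wreath B L)"
  shows "(g, f) \<otimes>\<^bsub>wreath B L\<^esub> (h, f') \<otimes>\<^bsub>wreath B L\<^esub> (j, f'') =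
    (g, f) \<otimes>\<^bsub>wreath B L\<^esub> ((h, f') \<otimes>\<^bsub>wreath B L\<^esub> (j, f''))"
proof -
  have g: "g \<in> carrier B" and h: "h \<in> carrier B" and j: "j \<in> carrier B"
    and f: "f \<in> carrier B \<rightarrow> carrier L" and f': "f' \<in> carrier B \<rightarrow> carrier L"
    and f'': "f'' \<in> carrier B \<rightarrow> carrier L"
    using assms by (auto simp: carrier_wreath)
  have "inv\<^bsub>B\<^esub> (g \<otimes>\<^bsub>B\<^esub> h) \<otimes>\<^bsub>B\<^esub> x = inv\<^bsub>B\<^esub> h \<otimes>\<^bsub>B\<^esub> (inv\<^bsub>B\<^esub> g \<otimes>\<^bsub>B\<^esub> x)"
    if "x \<in> carrier B" for x
    using g h that by (simp add: B.inv_mult_group B.m_assoc)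
  then show ?thesis
    using g h j f f' f'' by (auto simp: mult_wreath B.m_assoc L.m_assoc Pi_iff intro!: restrict_ext)
qed

lemma group_wreath: "group (wreath B L)"
proof (rule groupI)
  fix x y z assume "x \<in> carrier (wreath B L)" "y \<in> carrier (wreath B L)" "z \<in> carrier (wreath B L)"
  then show "x \<otimes>\<^bsub>wreath B L\<^esub> y \<otimes>\<^bsub>wreath B L\<^esub> z = x \<otimes>\<^bsub>wreath B L\<^esub> (y \<otimes>\<^bsub>wreath B L\<^esub> z)"
    by (cases x; cases y; cases z) (simp only: wreath_mult_assoc)
next
  fix z assume z: "z \<in> carrier (wreath B L)"
  obtain g f where gf: "z = (g, f)" by (cases z)
  then have g: "g \<in> carrier B" and f: "f \<in> carrier B \<rightarrow> carrier L"
    and supp: "finite {x \<in> carrier B. f x \<noteq> \<one>\<^bsub>L\<^esub>}"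
    using z by (auto simp: carrier_wreath)
  let ?y = "(inv\<^bsub>B\<^esub> g, \<lambda>x\<in>carrier B. inv\<^bsub>L\<^esub> f (g \<otimes>\<^bsub>B\<^esub> x))"
  have "finite {x \<in> carrier B. (\<lambda>x\<in>carrier B. inv\<^bsub>L\<^esub> f (g \<otimes>\<^bsub>B\<^esub> x)) x \<noteq> \<one>\<^bsub>L\<^esub>}"
    using B.finite_support_translate[OF g supp] by (rule finite_subset[rotated]) auto
  then have "?y \<in> carrier (wreath B L)"
    using f g by (auto simp: carrier_wreath)
  moreover have "?y \<otimes>\<^bsub>wreath B L\<^esub> z = \<one>\<^bsub>wreath B L\<^esub>"
    using gf f g by (auto simp: mult_wreath one_wreath Pi_iff intro!: restrict_ext)
  ultimately show "\<exists>y\<in>carrier (wreath B L). y \<otimes>\<^bsub>wreath B L\<^esub> z = \<one>\<^bsub>wreath B L\<^esub>" by blast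
next
  fix x assume "x \<in> carrier (wreath B L)"
  then show "\<one>\<^bsub>wreath B L\<^esub> \<otimes>\<^bsub>wreath B L\<^esub> x = x"
    by (cases x) (auto simp: one_wreath mult_wreath carrier_wreath Pi_iff extensional_def)
qed (auto simp: wreath_mult_closed one_wreath carrier_wreath)

end

definition word_inv :: "word3 \<Rightarrow> word3" where
  "word_inv w = rev (map (\<lambda>(v, e). (v, \<not> e)) w)"

context group
begin

lemma eval_word_closed:
  assumes "\<And>v. gens v \<in> carrier G"
  shows "eval_word G gens w \<in> carrier G"
  using assms by (induction w) auto

lemma eval_word_append:
  assumes "\<And>v. gens v \<in> carrier G"
  shows "eval_word G gens (w @ w') = eval_word G gens w \<otimes> eval_word G gens w'"
  using assms by (induction w) (auto simp: eval_word_closed m_assoc)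

lemma eval_word_word_inv:
  assumes "\<And>v. gens v \<in> carrier G"
  shows "eval_word G gens (word_inv w) = inv (eval_word G gens w)"
proof (induction w)
  case (Cons a w)
  then show ?case using assms
    by (cases a) (auto simp: word_inv_def eval_word_append eval_word_closed inv_mult_group)
qed (simp add: word_inv_def)

lemma range_eval_word:
  assumes gens: "\<And>v. gens v \<in> carrier G"
  shows "range (eval_word G gens) = generate G (range gens)"
proof
  show "range (eval_word G gens) \<subseteq> generate G (range gens)"
  proof clarify
    fix w show "eval_word G gens w \<in> generate G (range gens)"
    proof (induction w)
      case (Cons a w)
      obtain v e where a: "a = (v, e)" by (cases a)
      have "(if e then inv (gens v) else gens v) \<in> generate G (range gens)"
        by (simp add: generate.incl generate.inv)
      from generate.eng[OF this Cons.IH] show ?case by (simp add: a)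
    qed (simp add: generate.one)
  qed
  show "generate G (range gens) \<subseteq> range (eval_word G gens)"
  proof
    fix x assume "x \<in> generate G (range gens)"
    then show "x \<in> range (eval_word G gens)"
    proof (induction x rule: generate.induct)
      case one
      show ?case using eval_word.simps(1) by (metis rangeI)
    next
      case (incl h)
      then obtain v where "h = gens v" by blast
      then show ?case using gens by (intro image_eqI[of _ _ "[(v, False)]"]) auto
    next
      case (inv h)
      then obtain v where "h = gens v" by blast
      then show ?case using gens by (intro image_eqI[of _ _ "[(v, True)]"]) auto
    next
      case (eng h h')
      then obtain w w' where "h = eval_word G gens w" "h' = eval_word G gens w'" by blast
      then show ?case using gens by (intro image_eqI[of _ _ "w @ w'"]) (simp_all add: eval_word_append)
    qed
  qed
qed

end

lemma eval_word_subgroup_generated: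
  assumes "group G" "\<And>v. gens v \<in> carrier G \<inter> S"
  shows "eval_word (subgroup_generated G S) gens w = eval_word G gens w"
proof (induction w)
  case (Cons a w)
  have "gens v \<in> carrier (subgroup_generated G S)" for v
    using assms(2) by (auto simp: carrier_subgroup_generated intro: generate.incl)
  then show ?case
    using Cons group.inv_subgroup_generated[OF assms(1)] by (cases a) auto
qed simp

lemma eval_word_product_group:
  assumes "\<And>i. i \<in> I \<Longrightarrow> group (Gs i)" "\<And>v. gens v \<in> carrier (product_group I Gs)"
  shows "eval_word (product_group I Gs) gens w = (\<lambda>i\<in>I. eval_word (Gs i) (\<lambda>v. gens v i) w)"
proof (induction w)
  case (Cons a w)
  have "inv\<^bsub>product_group I Gs\<^esub> (gens v) = (\<lambda>i\<in>I. inv\<^bsub>Gs i\<^esub> (gens v i))" for v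
    using assms by simp
  with Cons show ?case
    by (cases a) (auto simp: fun_eq_iff)
qed simp

lemma eval_word_eq_if_relations:
  assumes "group G" "group H" "\<And>v. gG v \<in> carrier G" "\<And>v. gH v \<in> carrier H"
    and relations: "\<And>w. eval_word H gH w = \<one>\<^bsub>H\<^esub> \<Longrightarrow> eval_word G gG w = \<one>\<^bsub>G\<^esub>"
    and "eval_word H gH w = eval_word H gH w'"
  shows "eval_word G gG w = eval_word G gG w'"
proof -
  interpret G: group G by fact
  interpret H: group H by fact
  have "eval_word H gH (w @ word_inv w') = \<one>\<^bsub>H\<^esub>"
    using assms by (simp add: H.eval_word_append H.eval_word_word_inv H.eval_word_closed)
  then have "eval_word G gG (w @ word_inv w') = \<one>\<^bsub>G\<^esub>" by (rule relations)
  then have "eval_word G gG w \<otimes>\<^bsub>G\<^esub> inv\<^bsub>G\<^esub> eval_word G gG w' = \<one>\<^bsub>G\<^esub>"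
    using assms by (simp add: G.eval_word_append G.eval_word_word_inv)
  then show ?thesis
    using assms by (metis G.eval_word_closed G.inv_closed G.inv_equality G.inv_inv)
qed

lemma marked_quotientI:
  assumes G: "group G" and H: "group H"
    and gens: "\<And>v. gG v \<in> carrier G" "\<And>v. gH v \<in> carrier H"
    and gen_G: "carrier G \<subseteq> range (eval_word G gG)"
    and gen_H: "carrier H \<subseteq> range (eval_word H gH)"
    and relations: "\<And>w. eval_word H gH w = \<one>\<^bsub>H\<^esub> \<Longrightarrow> eval_word G gG w = \<one>\<^bsub>G\<^esub>"
  shows "marked_quotient G gG H gH"
proof -
  interpret G: group G by (fact G)
  interpret H: group H by (fact H)
  let ?eG = "eval_word G gG" and ?eH = "eval_word H gH"
  define h where "h x = ?eG (SOME w. ?eH w = x)" for x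
  have h_eval: "h (?eH w) = ?eG w" for w
    unfolding h_def using someI[of "\<lambda>w'. ?eH w' = ?eH w"]
    by (intro eval_word_eq_if_relations[OF G H gens relations]) auto
  have "h \<in> hom H G"
  proof (rule homI)
    fix x assume "x \<in> carrier H"
    with gen_H obtain w where "x = ?eH w" by blast
    then show "h x \<in> carrier G" using gens by (simp add: h_eval G.eval_word_closed)
  next
    fix x y assume "x \<in> carrier H" "y \<in> carrier H"
    with gen_H obtain w w' where x: "x = ?eH w" and y: "y = ?eH w'" by blast
    have "h (x \<otimes>\<^bsub>H\<^esub> y) = h (?eH (w @ w'))" using gens by (simp add: x y H.eval_word_append)
    also have "\<dots> = h x \<otimes>\<^bsub>G\<^esub> h y" using gens by (simp add: x y h_eval G.eval_word_append)
    finally show "h (x \<otimes>\<^bsub>H\<^esub> y) = h x \<otimes>\<^bsub>G\<^esub> h y" .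
  qed
  moreover have "h (gH v) = gG v" for v
    using h_eval[of "[(v, False)]"] gens by simp
  moreover have "carrier G \<subseteq> h ` carrier H"
  proof
    fix z assume "z \<in> carrier G"
    with gen_G obtain w where "z = h (?eH w)" by (auto simp: h_eval)
    then show "z \<in> h ` carrier H" using gens by (simp add: H.eval_word_closed)
  qed
  ultimately have "h \<in> hom H G \<and> (\<forall>v. h (gH v) = gG v) \<and> h ` carrier H = carrier G"
    by (auto simp: hom_def)
  then show ?thesis unfolding marked_quotient_def by blast
qed

section \<open>Normal form of words in \<open>\<int>/n\<int> \<wr> D\<^sub>l\<close>\<close>

abbreviation ZwrD :: "nat \<Rightarrow> enat \<Rightarrow> (int \<times> (int \<Rightarrow> int \<times> bool)) monoid" where
  "ZwrD n l \<equiv> wreath (integer_mod_group n) (dihedral l)"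

text \<open>
  The marked generators \<open>\<tau>, a\<delta>\<^sub>0, b\<delta>\<^sub>c\<close>: \<open>\<Gamma>(0,2,\<infinity>)\<close> is the case \<open>n = 0, l = 2,
  c = 0\<close>, and the \<open>s\<close>-th coordinate of \<open>\<Delta>\<close> the case \<open>n = m\<^sub>s, l = l\<^sub>s, c = k\<^sub>s\<close>
  (with \<open>n = 0\<close> for \<open>m\<^sub>s = \<infinity>\<close>).
\<close>
definition wreath_gens :: "nat \<Rightarrow> enat \<Rightarrow> int \<Rightarrow> letter \<Rightarrow> int \<times> (int \<Rightarrow> int \<times> bool)" where
  "wreath_gens n l c = marked3
     (1 mod int n, triv_fun (integer_mod_group n) (dihedral l))
     (0, delta_fun (integer_mod_group n) (dihedral l) (dih_a l) 0)
     (0, delta_fun (integer_mod_group n) (dihedral l) (dih_b l) (c mod int n))"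

abbreviation eval_Gamma :: "word3 \<Rightarrow> int \<times> (int \<Rightarrow> int \<times> bool)" where
  "eval_Gamma \<equiv> eval_word (ZwrD 0 2) (wreath_gens 0 2 0)"

fun cursor :: "word3 \<Rightarrow> int" where
  "cursor [] = 0"
| "cursor ((X1, e) # w) = (if e then -1 else 1) + cursor w"
| "cursor (_ # w) = cursor w"

text \<open>
  The \<open>\<alpha>\<close>- and \<open>\<beta>\<close>-letters are involutions, so their sign is irrelevant; each records the
  cursor position at which it is read together with whether it is a \<open>\<beta>\<close>.
\<close>
fun lamp_events :: "word3 \<Rightarrow> (int \<times> bool) list" where
  "lamp_events [] = []"
| "lamp_events ((X1, e) # w) = map (apfst ((+) (if e then -1 else 1))) (lamp_events w)"
| "lamp_events ((X2, _) # w) = (0, False) # lamp_events w"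
| "lamp_events ((X3, _) # w) = (0, True) # lamp_events w"

definition lamp_value :: "enat \<Rightarrow> bool \<Rightarrow> int \<times> bool" where
  "lamp_value l t = (if t then dih_b l else dih_a l)"

definition lamp_site :: "nat \<Rightarrow> int \<Rightarrow> int \<times> bool \<Rightarrow> int" where
  "lamp_site n c e = (fst e + (if snd e then c else 0)) mod int n"

fun lamps :: "nat \<Rightarrow> enat \<Rightarrow> int \<Rightarrow> (int \<times> bool) list \<Rightarrow> int \<Rightarrow> int \<times> bool" where
  "lamps n l c [] x = (0, False)"
| "lamps n l c (e # E) x =
     (if lamp_site n c e = x then lamp_value l (snd e) \<otimes>\<^bsub>dihedral l\<^esub> lamps n l c E x
      else lamps n l c E x)"

lemma group_ZwrD [simp]: "group (ZwrD n l)"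
  by (intro group_wreath group_integer_mod_group group_dihedral)

lemma dihedral_one_mult [simp]: "p \<in> carrier (dihedral l) \<Longrightarrow> (0, False) \<otimes>\<^bsub>dihedral l\<^esub> p = p"
  by (cases p) (simp add: mult_dihedral carrier_dihedral)

lemma dihedral_mult_one [simp]: "p \<in> carrier (dihedral l) \<Longrightarrow> p \<otimes>\<^bsub>dihedral l\<^esub> (0, False) = p"
  by (cases p) (simp add: mult_dihedral carrier_dihedral)

lemma lamp_value_closed [simp]: "lamp_value l t \<in> carrier (dihedral l)"
  by (simp add: lamp_value_def dih_a_def dih_b_def carrier_dihedral zcls_def)

lemma lamp_value_squared: "lamp_value l t \<otimes>\<^bsub>dihedral l\<^esub> lamp_value l t = (0, False)"
  by (cases t) (simp_all add: lamp_value_def dih_a_def dih_b_def mult_dihedral zcls_def)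

lemma lamp_value_neq_one: "lamp_value l t \<noteq> (0, False)"
  by (simp add: lamp_value_def dih_a_def dih_b_def)

lemma lamps_closed [simp]: "lamps n l c E x \<in> carrier (dihedral l)"
proof (induction E)
  case (Cons e E)
  then show ?case by (simp add: monoid.m_closed[OF group.is_monoid[OF group_dihedral]])
qed (simp add: carrier_dihedral zcls_def)

lemma lamp_site_closed [simp]: "lamp_site n c e \<in> carrier (integer_mod_group n)"
  by (simp add: lamp_site_def carrier_integer_mod_group_iff)

lemma lamps_shift:
  assumes "x mod int n = x"
  shows "lamps n l c (map (apfst ((+) s)) E) x = lamps n l c E ((x - s) mod int n)"
proof (induction E)
  case (Cons e E)
  have "(fst e + s + (if snd e then c else 0)) mod int n = x mod int n \<longleftrightarrow>
      (fst e + (if snd e then c else 0)) mod int n = (x - s) mod int n"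
    by (simp add: mod_eq_dvd_iff algebra_simps)
  with assms Cons show ?case by (simp add: lamp_site_def add.commute add.left_commute)
qed simp

lemma delta_fun_closed:
  assumes "v \<in> carrier (dihedral l)" "g \<in> carrier (integer_mod_group n)"
  shows "(0, delta_fun (integer_mod_group n) (dihedral l) v g) \<in> carrier (ZwrD n l)"
proof -
  have "{x \<in> carrier (integer_mod_group n).
      delta_fun (integer_mod_group n) (dihedral l) v g x \<noteq> \<one>\<^bsub>dihedral l\<^esub>} \<subseteq> {g}"
    by (auto simp: delta_fun_def)
  then show ?thesis using assms finite_subset
    by (auto simp: carrier_wreath delta_fun_def one_dihedral carrier_dihedral zcls_def)
qed

lemma shift_closed: "(s mod int n, triv_fun (integer_mod_group n) (dihedral l)) \<in> carrier (ZwrD n l)"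
  by (simp add: carrier_wreath triv_fun_def one_dihedral carrier_dihedral carrier_integer_mod_group_iff
      zcls_def)

lemma wreath_gens_closed [simp]: "wreath_gens n l c v \<in> carrier (ZwrD n l)"
  by (cases v) (simp_all add: wreath_gens_def marked3_def shift_closed delta_fun_closed
      carrier_integer_mod_group_iff dih_a_def dih_b_def carrier_dihedral zcls_def)

lemma mult_shift_lamps:
  "(s mod int n, triv_fun (integer_mod_group n) (dihedral l)) \<otimes>\<^bsub>ZwrD n l\<^esub>
      (p mod int n, \<lambda>x\<in>carrier (integer_mod_group n). lamps n l c E x)
    = ((s + p) mod int n, \<lambda>x\<in>carrier (integer_mod_group n). lamps n l c (map (apfst ((+) s)) E) x)"
proof -
  have "inv\<^bsub>integer_mod_group n\<^esub> (s mod int n) \<otimes>\<^bsub>integer_mod_group n\<^esub> x = (x - s) mod int n" for x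
    by (simp add: carrier_integer_mod_group_iff mod_simps)
  then show ?thesis
    by (auto simp: mult_wreath triv_fun_def one_dihedral mod_simps carrier_integer_mod_group_iff
        lamps_shift intro!: restrict_ext)
qed

lemma mult_delta_lamps:
  "(0, delta_fun (integer_mod_group n) (dihedral l) (lamp_value l t) (lamp_site n c (0, t)))
      \<otimes>\<^bsub>ZwrD n l\<^esub> (p mod int n, \<lambda>x\<in>carrier (integer_mod_group n). lamps n l c E x)
    = (p mod int n, \<lambda>x\<in>carrier (integer_mod_group n). lamps n l c ((0, t) # E) x)"
  by (auto simp: mult_wreath delta_fun_def one_dihedral carrier_integer_mod_group_iff
      intro!: restrict_ext)

lemma inv_shift:
  "inv\<^bsub>ZwrD n l\<^esub> (s mod int n, triv_fun (integer_mod_group n) (dihedral l)) =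
     ((- s) mod int n, triv_fun (integer_mod_group n) (dihedral l))"
proof (rule group.inv_equality[OF group_ZwrD])
  show "((- s) mod int n, triv_fun (integer_mod_group n) (dihedral l)) \<otimes>\<^bsub>ZwrD n l\<^esub>
      (s mod int n, triv_fun (integer_mod_group n) (dihedral l)) = \<one>\<^bsub>ZwrD n l\<^esub>"
    by (auto simp: mult_wreath one_wreath triv_fun_def one_dihedral mult_dihedral mod_simps zcls_def
        carrier_integer_mod_group_iff intro!: restrict_ext)
qed (simp_all add: shift_closed)

lemma inv_delta_lamp_value:
  assumes "g \<in> carrier (integer_mod_group n)"
  shows "inv\<^bsub>ZwrD n l\<^esub> (0, delta_fun (integer_mod_group n) (dihedral l) (lamp_value l t) g) =
    (0, delta_fun (integer_mod_group n) (dihedral l) (lamp_value l t) g)"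
proof (rule group.inv_equality[OF group_ZwrD])
  show "(0, delta_fun (integer_mod_group n) (dihedral l) (lamp_value l t) g) \<otimes>\<^bsub>ZwrD n l\<^esub>
      (0, delta_fun (integer_mod_group n) (dihedral l) (lamp_value l t) g) = \<one>\<^bsub>ZwrD n l\<^esub>"
    by (auto simp: mult_wreath one_wreath delta_fun_def lamp_value_squared one_dihedral mult_dihedral zcls_def
        carrier_integer_mod_group_iff intro!: restrict_ext)
qed (use assms in \<open>simp_all add: delta_fun_closed\<close>)

lemma signed_wreath_gens:
  "(if e then inv\<^bsub>ZwrD n l\<^esub> (wreath_gens n l c v) else wreath_gens n l c v) =
     (case v of
        X1 \<Rightarrow> ((if e then -1 else 1) mod int n, triv_fun (integer_mod_group n) (dihedral l))
      | X2 \<Rightarrow> (0, delta_fun (integer_mod_group n) (dihedral l) (lamp_value l False) (lamp_site n c (0, False)))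
      | X3 \<Rightarrow> (0, delta_fun (integer_mod_group n) (dihedral l) (lamp_value l True) (lamp_site n c (0, True))))"
  using inv_delta_lamp_value[of 0 n l False] inv_delta_lamp_value[of "c mod int n" n l True]
  by (cases v) (auto simp: wreath_gens_def marked3_def inv_shift lamp_value_def lamp_site_def
      carrier_integer_mod_group_iff)

lemma eval_word_wreath_gens:
  "eval_word (ZwrD n l) (wreath_gens n l c) w =
     (cursor w mod int n, \<lambda>x\<in>carrier (integer_mod_group n). lamps n l c (lamp_events w) x)"
proof (induction w)
  case (Cons a w)
  obtain v e where a: "a = (v, e)" by (cases a)
  have "eval_word (ZwrD n l) (wreath_gens n l c) (a # w) =
      (if e then inv\<^bsub>ZwrD n l\<^esub> (wreath_gens n l c v) else wreath_gens n l c v) \<otimes>\<^bsub>ZwrD n l\<^esub>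
      (cursor w mod int n, \<lambda>x\<in>carrier (integer_mod_group n). lamps n l c (lamp_events w) x)"
    by (simp only: a eval_word.simps Cons.IH)
  then show ?case
    unfolding signed_wreath_gens a
    by (cases v) (simp_all only: letter.case mult_shift_lamps mult_delta_lamps cursor.simps
        lamp_events.simps)
qed (simp add: one_wreath one_dihedral restrict_def)

section \<open>Triviality of short words\<close>

lemma eval_word_wreath_gens_eq_one_iff:
  "eval_word (ZwrD n l) (wreath_gens n l c) w = \<one>\<^bsub>ZwrD n l\<^esub> \<longleftrightarrow>
     cursor w mod int n = 0 \<and>
     (\<forall>x\<in>carrier (integer_mod_group n). lamps n l c (lamp_events w) x = (0, False))"
  by (auto simp: eval_word_wreath_gens one_wreath one_dihedral restrict_def fun_eq_iff)

lemma lamps_single_kind: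
  assumes "\<forall>e\<in>set E. lamp_site n c e = x \<longrightarrow> snd e = t"
  shows "lamps n l c E x =
    (if even (length (filter (\<lambda>e. lamp_site n c e = x) E)) then (0, False) else lamp_value l t)"
  using assms by (induction E) (auto simp: lamp_value_squared)

lemma lamps_inj_on_eq_one_iff:
  assumes "inj_on (lamp_site n c) (set E)"
  shows "(\<forall>x\<in>carrier (integer_mod_group n). lamps n l c E x = (0, False)) \<longleftrightarrow>
    (\<forall>e. even (count (mset E) e))"
proof -
  have at_site: "lamps n l c E (lamp_site n c e) = (0, False) \<longleftrightarrow> even (count (mset E) e)"
    if "e \<in> set E" for e
  proof -
    have "filter (\<lambda>e'. lamp_site n c e' = lamp_site n c e) E = filter ((=) e) E"
      using assms that by (auto simp: inj_on_def intro!: filter_cong)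
    moreover have "\<forall>e'\<in>set E. lamp_site n c e' = lamp_site n c e \<longrightarrow> snd e' = snd e"
      using assms that by (auto simp: inj_on_def)
    ultimately show ?thesis
      by (simp add: lamps_single_kind[where t = "snd e"] lamp_value_neq_one count_mset
          count_list_eq_length_filter)
  qed
  have off_site: "lamps n l c E x = (0, False)" if "x \<notin> lamp_site n c ` set E" for x
    using that by (induction E) auto
  show ?thesis
  proof
    assume "\<forall>x\<in>carrier (integer_mod_group n). lamps n l c E x = (0, False)"
    then show "\<forall>e. even (count (mset E) e)"
      using at_site by (metis count_mset_0_iff even_zero lamp_site_closed)
  next
    assume "\<forall>e. even (count (mset E) e)"
    then show "\<forall>x\<in>carrier (integer_mod_group n). lamps n l c E x = (0, False)"
      using at_site off_site by (metis imageE)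
  qed
qed

lemma lamps_Gamma:
  "lamps 0 2 0 E x = (int (count (mset E) (x, True)) mod 2,
     odd (count (mset E) (x, True) + count (mset E) (x, False)))"
proof (induction E)
  case (Cons e E)
  obtain y t where "e = (y, t)" by (cases e)
  with Cons show ?case
    by (cases t; auto simp: lamp_site_def lamp_value_def dih_a_def dih_b_def mult_dihedral zcls_def
        zmod_index_def numeral_eq_enat mod_simps; presburger)
qed simp

lemma lamps_Gamma_eq_one_iff:
  "(\<forall>x. lamps 0 2 0 E x = (0, False)) \<longleftrightarrow> (\<forall>e. even (count (mset E) e))"
  by (auto simp: lamps_Gamma even_iff_mod_2_eq_zero[symmetric]) (metis surj_pair)

lemma abs_cursor_le_length: "\<bar>cursor w\<bar> \<le> int (length w)"
  by (induction w rule: cursor.induct) auto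

text \<open>The start position \<open>0\<close> is included so that the bound survives prefixing a \<open>\<tau>\<close>-letter.\<close>
lemma lamp_events_spread:
  assumes "y \<in> insert 0 (fst ` set (lamp_events w))" "y' \<in> insert 0 (fst ` set (lamp_events w))"
  shows "\<bar>y - y'\<bar> \<le> int (length w)"
  using assms
proof (induction w arbitrary: y y' rule: lamp_events.induct)
  case (2 e w)
  define s :: int where "s = (if e then -1 else 1)"
  let ?P = "insert 0 (fst ` set (lamp_events w))"
  have shifted: "\<exists>z\<in>?P. y = 0 \<or> y = s + z" if "y \<in> insert 0 (fst ` set (lamp_events ((X1, e) # w)))" for y
    using that by (fastforce simp: s_def image_image)
  obtain z z' where "z \<in> ?P" "y = 0 \<or> y = s + z" "z' \<in> ?P" "y' = 0 \<or> y' = s + z'"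
    using shifted[OF "2.prems"(1)] shifted[OF "2.prems"(2)] by blast
  moreover have "0 \<in> ?P" by simp
  ultimately have "\<bar>z - z'\<bar> \<le> int (length w)" "\<bar>z - 0\<bar> \<le> int (length w)" "\<bar>0 - z'\<bar> \<le> int (length w)"
    using "2.IH" by blast+
  then show ?case
    using \<open>y = 0 \<or> y = s + z\<close> \<open>y' = 0 \<or> y' = s + z'\<close> by (auto simp: s_def abs_le_iff)
next
  case (3 _ w)
  then have "\<bar>y - y'\<bar> \<le> int (length w)" by (intro "3.IH") auto
  then show ?case by simp
next
  case (4 _ w)
  then have "\<bar>y - y'\<bar> \<le> int (length w)" by (intro "4.IH") auto
  then show ?case by simp
qed simp

lemma lamp_site_inj_on_lamp_events:
  assumes "length w < k" "n = 0 \<or> 2 * k < n"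
  shows "inj_on (lamp_site n (int k)) (set (lamp_events w))"
proof (rule inj_onI)
  fix e e' assume e: "e \<in> set (lamp_events w)" and e': "e' \<in> set (lamp_events w)"
    and eq: "lamp_site n (int k) e = lamp_site n (int k) e'"
  obtain y t y' t' where ee: "e = (y, t)" "e' = (y', t')" by (cases e, cases e')
  have "y \<in> insert 0 (fst ` set (lamp_events w))" "y' \<in> insert 0 (fst ` set (lamp_events w))"
    using e e' unfolding ee by (auto intro: rev_image_eqI)
  then have spread: "\<bar>y - y'\<bar> < int k"
    using lamp_events_spread assms(1) by (meson le_less_trans of_nat_less_iff)
  define d where "d = (y + (if t then int k else 0)) - (y' + (if t' then int k else 0))"
  have "int n dvd d" using eq by (simp add: ee lamp_site_def d_def mod_eq_dvd_iff)
  moreover have "n = 0 \<or> \<bar>d\<bar> < int n" using assms(2) spread by (auto simp: d_def)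
  ultimately have "d = 0" using dvd_imp_le_int[of d "int n"] by (cases "d = 0") auto
  then show "e = e'" using spread by (cases t; cases t') (auto simp: ee d_def)
qed

lemma short_word_eq_one_iff_Gamma:
  assumes "length w < k" "n = 0 \<or> 2 * k < n"
  shows "eval_word (ZwrD n l) (wreath_gens n l (int k)) w = \<one>\<^bsub>ZwrD n l\<^esub> \<longleftrightarrow>
    eval_Gamma w = \<one>\<^bsub>ZwrD 0 2\<^esub>"
proof -
  have "n = 0 \<or> \<bar>cursor w\<bar> < int n"
    using abs_cursor_le_length[of w] assms by linarith
  then have "cursor w mod int n = 0 \<longleftrightarrow> cursor w = 0"
    using dvd_imp_le_int[of "cursor w" "int n"] by (cases "cursor w = 0") (auto simp: mod_eq_0_iff_dvd)
  then show ?thesis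
    using lamps_inj_on_eq_one_iff[OF lamp_site_inj_on_lamp_events[OF assms]]
    by (simp add: eval_word_wreath_gens_eq_one_iff lamps_Gamma_eq_one_iff carrier_integer_mod_group)
qed

section \<open>\<open>\<Gamma>(0,2,\<infinity>)\<close> is generated by its marked generators\<close>

lemma cursor_append: "cursor (w @ w') = cursor w + cursor w'"
  by (induction w rule: cursor.induct) auto

lemma lamp_events_append:
  "lamp_events (w @ w') = lamp_events w @ map (apfst ((+) (cursor w))) (lamp_events w')"
  by (induction w rule: lamp_events.induct) (auto simp: apfst_def map_prod_def add.assoc)

definition shift_word :: "int \<Rightarrow> word3" where
  "shift_word x = replicate (nat \<bar>x\<bar>) (X1, x < 0)"

lemma cursor_shift_word [simp]: "cursor (shift_word x) = x"
proof -
  have "cursor (replicate j (X1, e)) = (if e then - int j else int j)" for j e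
    by (induction j) auto
  then show ?thesis by (simp add: shift_word_def)
qed

lemma lamp_events_shift_word [simp]: "lamp_events (shift_word x) = []"
proof -
  have "lamp_events (replicate j (X1, e)) = []" for j e
    by (induction j) auto
  then show ?thesis by (simp add: shift_word_def)
qed

lemma eval_word_Gamma:
  "eval_Gamma w = (cursor w, lamps 0 2 0 (lamp_events w))"
  by (simp add: eval_word_wreath_gens carrier_integer_mod_group restrict_UNIV)

lemma mult_Gamma_lamps:
  "(0, f) \<otimes>\<^bsub>ZwrD 0 l\<^esub> (g, f') = (g, \<lambda>y. f y \<otimes>\<^bsub>dihedral l\<^esub> f' y)"
  by (simp add: mult_wreath carrier_integer_mod_group restrict_UNIV)

lemma Gamma_lamp_word:
  assumes "c \<in> carrier (dihedral 2)"
  obtains cw where "cursor cw = 0" "lamps 0 2 0 (lamp_events cw) = (\<lambda>_. (0, False))(0 := c)"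
proof -
  obtain i t where c: "c = (i, t)" "i mod 2 = i"
    using assms by (cases c) (auto simp: carrier_dihedral zcls_def zmod_index_def numeral_eq_enat)
  then have "i = 0 \<or> i = 1" by presburger
  with c consider "c = (0, False)" | "c = (0, True)" | "c = (1, True)" | "c = (1, False)"
    by (cases t) auto
  then show ?thesis
  proof cases
    case 1 then show ?thesis by (intro that[of "[]"]) (auto simp: fun_eq_iff)
  next
    case 2 then show ?thesis
      by (intro that[of "[(X2, False)]"]) (auto simp: lamp_site_def lamp_value_def dih_a_def mult_dihedral zcls_def fun_eq_iff)
  next
    case 3 then show ?thesis
      by (intro that[of "[(X3, False)]"])
        (auto simp: lamp_site_def lamp_value_def dih_b_def mult_dihedral zcls_def zmod_index_def
          numeral_eq_enat fun_eq_iff)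
  next
    case 4 then show ?thesis
      by (intro that[of "[(X2, False), (X3, False)]"])
        (auto simp: lamp_site_def lamp_value_def dih_a_def dih_b_def mult_dihedral zcls_def
          zmod_index_def numeral_eq_enat fun_eq_iff)
  qed
qed

lemma subgroup_range_eval_Gamma: "subgroup (range eval_Gamma) (ZwrD 0 2)"
proof -
  have "range eval_Gamma = generate (ZwrD 0 2) (range (wreath_gens 0 2 0))"
    by (rule group.range_eval_word) simp_all
  then show ?thesis
    by (simp add: group.generate_is_subgroup image_subsetI)
qed

lemma Gamma_shift_in_range: "(x, \<lambda>_. (0, False)) \<in> range eval_Gamma"
proof -
  have "eval_Gamma (shift_word x) = (x, \<lambda>_. (0, False))"
    by (simp add: eval_word_Gamma fun_eq_iff)
  then show ?thesis by (metis rangeI)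
qed

lemma Gamma_lamp_in_range:
  assumes "c \<in> carrier (dihedral 2)"
  shows "(0, (\<lambda>_. (0, False))(x := c)) \<in> range eval_Gamma"
proof -
  obtain cw where cw: "cursor cw = 0" "lamps 0 2 0 (lamp_events cw) = (\<lambda>_. (0, False))(0 := c)"
    using Gamma_lamp_word[OF assms] by blast
  have "eval_Gamma (shift_word x @ cw @ shift_word (- x))
      = (0, lamps 0 2 0 (map (apfst ((+) x)) (lamp_events cw)))"
    using cw(1) by (simp add: eval_word_Gamma cursor_append lamp_events_append)
  also have "\<dots> = (0, (\<lambda>_. (0, False))(x := c))"
    using cw(2) by (simp add: lamps_shift fun_eq_iff)
  finally show ?thesis by (metis rangeI)
qed

lemma Gamma_finite_support_in_range:
  assumes "finite S" "\<forall>y. f y \<in> carrier (dihedral 2)" "{y. f y \<noteq> (0, False)} \<subseteq> S"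
  shows "(0, f) \<in> range eval_Gamma"
  using assms
proof (induction S arbitrary: f rule: finite_induct)
  case empty
  then have "f = (\<lambda>_. (0, False))" by auto
  then show ?case
    using subgroup.one_closed[OF subgroup_range_eval_Gamma]
    by (simp add: one_wreath carrier_integer_mod_group one_dihedral restrict_UNIV)
next
  case (insert x S)
  let ?f' = "f(x := (0, False))" and ?g = "(\<lambda>_. (0, False))(x := f x)"
  have "(0, ?f') \<in> range eval_Gamma"
    using insert by (intro insert.IH) (auto simp: carrier_dihedral zcls_def)
  moreover have "(0, ?g) \<in> range eval_Gamma"
    using insert.prems by (intro Gamma_lamp_in_range) auto
  ultimately have "(0, ?f') \<otimes>\<^bsub>ZwrD 0 2\<^esub> (0, ?g) \<in> range eval_Gamma"
    by (rule subgroup.m_closed[OF subgroup_range_eval_Gamma])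
  moreover have "(0, ?f') \<otimes>\<^bsub>ZwrD 0 2\<^esub> (0, ?g) = (0, f)"
    using insert.prems by (auto simp: mult_Gamma_lamps fun_eq_iff)
  ultimately show ?case by simp
qed

lemma Gamma_generated: "carrier (ZwrD 0 2) \<subseteq> range eval_Gamma"
proof
  fix z assume "z \<in> carrier (ZwrD 0 2)"
  then obtain g f where z: "z = (g, f)" "\<forall>y. f y \<in> carrier (dihedral 2)"
    "finite {y. f y \<noteq> (0, False)}"
    by (cases z) (auto simp: carrier_wreath carrier_integer_mod_group one_dihedral)
  then have "(0, f) \<otimes>\<^bsub>ZwrD 0 2\<^esub> (g, \<lambda>_. (0, False)) \<in> range eval_Gamma"
    using Gamma_finite_support_in_range Gamma_shift_in_range
    by (blast intro: subgroup.m_closed[OF subgroup_range_eval_Gamma])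
  moreover have "(0, f) \<otimes>\<^bsub>ZwrD 0 2\<^esub> (g, \<lambda>_. (0, False)) = z"
    using z by (simp add: mult_Gamma_lamps)
  ultimately show "z \<in> range eval_Gamma" by simp
qed

lemma Gamma_0_2_inf_eq: "Gamma_0_2_inf = ZwrD 0 2"
  by (simp add: Gamma_0_2_inf_def Zmod_def zmod_index_def)

lemma Gamma_gens_eq: "Gamma_gens = wreath_gens 0 2 0"
  by (simp add: Gamma_gens_def wreath_gens_def Zmod_def zmod_index_def)

lemma Prod_group_eq: "Prod_group l m = product_group {1..} (\<lambda>s. ZwrD (zmod_index (m s)) (l s))"
  by (simp add: Prod_group_def Zmod_def)

lemma Delta_gens_eq:
  "Delta_gens k l m v = (\<lambda>s\<in>{1..}. wreath_gens (zmod_index (m s)) (l s) (int (k s)) v)"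
  by (cases v) (simp_all add: Delta_gens_def marked3_def Delta_tau_def Delta_alpha_def
      Delta_beta_def wreath_gens_def Zmod_def zcls_def)

lemma group_Prod_group: "group (Prod_group l m)"
  unfolding Prod_group_eq by (rule product_group) simp

lemma Delta_gens_in_Prod_group: "Delta_gens k l m v \<in> carrier (Prod_group l m)"
  unfolding Prod_group_eq Delta_gens_eq by simp

lemma group_Delta: "group (Delta k l m)"
  unfolding Delta_def by (rule group.group_subgroup_generated[OF group_Prod_group])

lemma eval_word_Delta:
  "eval_word (Delta k l m) (Delta_gens k l m) w = eval_word (Prod_group l m) (Delta_gens k l m) w"
  unfolding Delta_def by (rule eval_word_subgroup_generated[OF group_Prod_group]) (simp add: Delta_gens_in_Prod_group)

lemma Delta_gens_in_Delta: "Delta_gens k l m v \<in> carrier (Delta k l m)"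
  unfolding Delta_def carrier_subgroup_generated by (rule generate.incl) (simp add: Delta_gens_in_Prod_group)

lemma Delta_generated: "carrier (Delta k l m) \<subseteq> range (eval_word (Delta k l m) (Delta_gens k l m))"
proof -
  have "carrier (Prod_group l m) \<inter> range (Delta_gens k l m) = range (Delta_gens k l m)"
    using Delta_gens_in_Prod_group by blast
  then show ?thesis
    using group.range_eval_word[OF group_Prod_group Delta_gens_in_Prod_group]
    by (simp add: Delta_def carrier_subgroup_generated eval_word_Delta[unfolded Delta_def])
qed

lemma Delta_word_eq_one_iff:
  "eval_word (Delta k l m) (Delta_gens k l m) w = \<one>\<^bsub>Delta k l m\<^esub> \<longleftrightarrow>
   (\<forall>s\<ge>1. eval_word (ZwrD (zmod_index (m s)) (l s)) (wreath_gens (zmod_index (m s)) (l s) (int (k s))) w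
      = \<one>\<^bsub>ZwrD (zmod_index (m s)) (l s)\<^esub>)"
proof -
  have "eval_word (Delta k l m) (Delta_gens k l m) w =
      (\<lambda>s\<in>{1..}. eval_word (ZwrD (zmod_index (m s)) (l s)) (wreath_gens (zmod_index (m s)) (l s) (int (k s))) w)"
    unfolding eval_word_Delta Prod_group_eq
    by (subst eval_word_product_group) (auto simp: Delta_gens_in_Prod_group[unfolded Prod_group_eq] Delta_gens_eq)
  moreover have "\<one>\<^bsub>Delta k l m\<^esub> = (\<lambda>s\<in>{1..}. \<one>\<^bsub>ZwrD (zmod_index (m s)) (l s)\<^esub>)"
    by (simp add: Delta_def Prod_group_eq)
  ultimately show ?thesis by (auto simp: fun_eq_iff)
qed

lemma zmod_index_gt:
  assumes "enat (2 * k) < m"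
  shows "zmod_index m = 0 \<or> 2 * k < zmod_index m"
  using assms by (cases m) (simp_all add: zmod_index_def)

lemma Delta_word_eq_one_iff_Gamma:
  assumes "\<forall>s\<ge>1. enat (2 * k s) < m s" "\<forall>s\<ge>1. length w < k s"
  shows "eval_word (Delta k l m) (Delta_gens k l m) w = \<one>\<^bsub>Delta k l m\<^esub> \<longleftrightarrow>
    eval_word Gamma_0_2_inf Gamma_gens w = \<one>\<^bsub>Gamma_0_2_inf\<^esub>"
  using assms short_word_eq_one_iff_Gamma[OF _ zmod_index_gt]
  by (auto simp: Delta_word_eq_one_iff Gamma_0_2_inf_eq Gamma_gens_eq)

lemma Gamma_relation_if_Delta_relation:
  assumes "enat (2 * k s) < m s" "s \<ge> 1" "length w < k s"
    and "eval_word (Delta k l m) (Delta_gens k l m) w = \<one>\<^bsub>Delta k l m\<^esub>"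
  shows "eval_word Gamma_0_2_inf Gamma_gens w = \<one>\<^bsub>Gamma_0_2_inf\<^esub>"
proof -
  have "eval_word (ZwrD (zmod_index (m s)) (l s)) (wreath_gens (zmod_index (m s)) (l s) (int (k s))) w
      = \<one>\<^bsub>ZwrD (zmod_index (m s)) (l s)\<^esub>"
    using assms(2,4) by (simp add: Delta_word_eq_one_iff)
  then show ?thesis using short_word_eq_one_iff_Gamma[OF assms(3) zmod_index_gt[OF assms(1)]]
    by (simp add: Gamma_0_2_inf_eq Gamma_gens_eq)
qed

theorem lemma2p3:
  fixes k :: "nat \<Rightarrow> nat" and l m :: "nat \<Rightarrow> enat"
  assumes "\<forall>s\<ge>1. l s \<ge> 2"
    and "\<forall>s\<ge>1. m s \<ge> 1"
    and "\<forall>s\<ge>1. enat (2 * k s) < m s"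
  shows "(\<forall>R::real. R < (real (INF s\<in>{1..}. k s) - 1) / 2 \<longrightarrow>
            balls_coincide R (Delta k l m) (Delta_gens k l m) Gamma_0_2_inf Gamma_gens)
       \<and> (\<not> bdd_above (k ` {1..}) \<longrightarrow>
            marked_quotient Gamma_0_2_inf Gamma_gens (Delta k l m) (Delta_gens k l m))"
proof (intro conjI allI impI)
  fix R :: real assume "R < (real (INF s\<in>{1..}. k s) - 1) / 2"
  then have R: "2 * R < real (INF s\<in>{1..}. k s) - 1" by simp
  have "length w < k s" if "real (length w) \<le> 2 * R" "s \<ge> 1" for w s
  proof -
    have "(INF s\<in>{1..}. k s) \<le> k s" using that(2) by (intro cINF_lower) auto
    then have "real (INF s\<in>{1..}. k s) \<le> real (k s)" by (rule of_nat_mono)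
    then have "real (length w) < real (k s)" using that(1) R by linarith
    then show ?thesis by simp
  qed
  then show "balls_coincide R (Delta k l m) (Delta_gens k l m) Gamma_0_2_inf Gamma_gens"
    unfolding balls_coincide_def using assms(3) by (intro allI impI Delta_word_eq_one_iff_Gamma) auto
next
  assume "\<not> bdd_above (k ` {1..})"
  then have long: "\<exists>s\<ge>1. length w < k s" for w
    by (meson atLeast_iff bdd_aboveI2 not_less)
  show "marked_quotient Gamma_0_2_inf Gamma_gens (Delta k l m) (Delta_gens k l m)"
  proof (rule marked_quotientI)
    fix w assume "eval_word (Delta k l m) (Delta_gens k l m) w = \<one>\<^bsub>Delta k l m\<^esub>"
    with long[of w] assms(3) show "eval_word Gamma_0_2_inf Gamma_gens w = \<one>\<^bsub>Gamma_0_2_inf\<^esub>"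
      using Gamma_relation_if_Delta_relation by blast
  qed (simp_all add: Gamma_0_2_inf_eq Gamma_gens_eq group_Delta Delta_gens_in_Delta
      Delta_generated Gamma_generated)
qed

end
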